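(* For every tournament $X$ on vertex set $V$, $U_X=U_{\overline{X}}$ and $S(U_X)=(-1)^{|V|}U_X$, where $S$ is the antipode of $QSym$.
   Context: A digraph $X=(V,E)$: $V$ finite, $E\subset\{(u,v)\in V\times V\mid u\ne v\}$; a tournament is a digraph in which for any two distinct vertices $u,v$ exactly one of $(u,v),(v,u)$ lies in $E$. $\overline{X}=(V,E^c)$ with $(u,v)\in E^c$ iff $u\ne v$ and $(u,v)\notin E$. $\Sigma_V$ is the set of bijections $\sigma:[n]\to V$, $X\mathrm{Des}(\sigma)=\{i\in[n-1]\mid(\sigma_i,\sigma_{i+1})\in E\}$; $F_I=\sum x_{i_1}\cdots x_{i_n}$ over $1\le i_1\le\cdots\le i_n$ with $i_j<i_{j+1}$ for $j\in I$; $U_X=\sum_{\sigma\in\Sigma_V}F_{X\mathrm{Des}(\sigma)}$. The antipode of $QSym$ satisfies $S(F_I)=(-1)^nF_{(I^{\mathrm{op}})^c}$ with $I^{\mathrm{op}}=\{n-i\mid i\in I\}$ and complement in $[n-1]$. *)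

theory Defs
  imports Main
begin

definition digraph :: "'v set \<Rightarrow> ('v \<times> 'v) set \<Rightarrow> bool" where
  "digraph V E \<longleftrightarrow> finite V \<and> E \<subseteq> {(u, v). u \<in> V \<and> v \<in> V \<and> u \<noteq> v}"

definition tournament :: "'v set \<Rightarrow> ('v \<times> 'v) set \<Rightarrow> bool" where
  "tournament V E \<longleftrightarrow> digraph V E \<and>
     (\<forall>u\<in>V. \<forall>v\<in>V. u \<noteq> v \<longrightarrow> ((u, v) \<in> E \<longleftrightarrow> (v, u) \<notin> E))"

definition compl_edges :: "'v set \<Rightarrow> ('v \<times> 'v) set \<Rightarrow> ('v \<times> 'v) set" where
  "compl_edges V E = {(u, v). u \<in> V \<and> v \<in> V \<and> u \<noteq> v \<and> (u, v) \<notin> E}"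

definition Sigma_V :: "'v set \<Rightarrow> (nat \<Rightarrow> 'v) set" where
  "Sigma_V V = {\<sigma>. bij_betw \<sigma> {1..card V} V \<and> (\<forall>j. j \<notin> {1..card V} \<longrightarrow> \<sigma> j = undefined)}"

definition XDes :: "'v set \<Rightarrow> ('v \<times> 'v) set \<Rightarrow> (nat \<Rightarrow> 'v) \<Rightarrow> nat set" where
  "XDes V E \<sigma> = {i \<in> {1..card V - 1}. (\<sigma> i, \<sigma> (Suc i)) \<in> E}"

text \<open>Formal power series in the variables x_1, x_2, ... with integer
  coefficients: a monomial is an exponent function alpha :: nat => nat
  (alpha k = exponent of x_k), a series maps monomials to coefficients.\<close>
type_synonym series = "(nat \<Rightarrow> nat) \<Rightarrow> int"

definition F :: "nat \<Rightarrow> nat set \<Rightarrow> series" where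
  "F n I = (\<lambda>\<alpha>. int (card {s :: nat \<Rightarrow> nat.
      (\<forall>j. j \<notin> {1..n} \<longrightarrow> s j = 0) \<and> (\<forall>j\<in>{1..n}. 1 \<le> s j) \<and>
      (\<forall>j. 1 \<le> j \<and> j < n \<longrightarrow> s j \<le> s (Suc j)) \<and>
      (\<forall>j\<in>I. s j < s (Suc j)) \<and>
      (\<forall>k. \<alpha> k = card {j \<in> {1..n}. s j = k})}))"

definition U :: "'v set \<Rightarrow> ('v \<times> 'v) set \<Rightarrow> series" where
  "U V E = (\<lambda>\<alpha>. \<Sum>\<sigma>\<in>Sigma_V V. F (card V) (XDes V E \<sigma>) \<alpha>)"

definition op_set :: "nat \<Rightarrow> nat set \<Rightarrow> nat set" where
  "op_set n I = (\<lambda>i. n - i) ` I"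

text \<open>The antipode of QSym on the homogeneous degree-n component, defined as
  the linear extension of S(F_I) = (-1)^n F_((I^op)^c) (complement in [n-1]).\<close>
definition antipode :: "nat \<Rightarrow> series \<Rightarrow> series" where
  "antipode n f = (THE g. \<exists>c :: nat set \<Rightarrow> int.
      f = (\<lambda>\<alpha>. \<Sum>I\<in>Pow {1..n - 1}. c I * F n I \<alpha>) \<and>
      g = (\<lambda>\<alpha>. \<Sum>I\<in>Pow {1..n - 1}. c I * (-1) ^ n * F n ({1..n - 1} - op_set n I) \<alpha>))"

end

theory Submission
  imports Defs "HOL-Library.FuncSet"
begin

(* The coefficient of x^alpha in F_I counts the weakly increasing sequences s of content alpha
   that increase strictly at the positions in I, and there is at most one such s, because the
   content of a weakly increasing sequence determines it.  Hence the coefficient of x^alpha in U_X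
   counts the pairs (sigma, s) in which s is constant only across steps sigma_j sigma_(j+1) that are
   not edges of X.  Reflecting sigma inside every maximal block on which s is constant is an
   involution that carries these pairs for X to those for the converse digraph, so U_X is invariant
   under reversing all edges, for every digraph.

   Reading sigma backwards turns its X-descent set I into (I^op)^c, the descent set of the reversed
   permutation with respect to the converse of the complement of X.  So S(U_X) is (-1)^n times
   the U of that converse, which is (-1)^n U_Xbar by the first part.  This needs S to be well
   defined on U_X: the F_I are linearly independent, since at the content of the canonical
   sequence with ascents exactly at J, F_I vanishes unless I is a subset of J.  For a tournament
   the complement is the converse, which gives both claims. *)

definition weakly_increasing :: "nat \<Rightarrow> (nat \<Rightarrow> nat) \<Rightarrow> bool" where
  "weakly_increasing n s \<longleftrightarrow> (\<forall>j. 1 \<le> j \<and> j < n \<longrightarrow> s j \<le> s (Suc j))"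

definition content :: "nat \<Rightarrow> (nat \<Rightarrow> nat) \<Rightarrow> nat \<Rightarrow> nat" where
  "content n s k = card {j \<in> {1..n}. s j = k}"

definition F_seqs :: "nat \<Rightarrow> nat set \<Rightarrow> (nat \<Rightarrow> nat) \<Rightarrow> (nat \<Rightarrow> nat) set" where
  "F_seqs n I \<alpha> = {s. (\<forall>j. j \<notin> {1..n} \<longrightarrow> s j = 0) \<and> (\<forall>j\<in>{1..n}. 1 \<le> s j) \<and>
     weakly_increasing n s \<and> (\<forall>j\<in>I. s j < s (Suc j)) \<and> content n s = \<alpha>}"

lemma F_eq_card_F_seqs: "F n I \<alpha> = int (card (F_seqs n I \<alpha>))"
  unfolding F_def F_seqs_def weakly_increasing_def content_def
  by (simp add: fun_eq_iff eq_commute[of "card _"])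

lemma weakly_increasing_le:
  assumes "weakly_increasing n s" "1 \<le> i" "i \<le> j" "j \<le> n"
  shows "s i \<le> s j"
  using assms(3,4)
proof (induction j rule: dec_induct)
  case (step j)
  then have "s i \<le> s j" by simp
  also have "s j \<le> s (Suc j)"
    using assms(1,2) step.hyps step.prems unfolding weakly_increasing_def by simp
  finally show ?case .
qed simp

lemma card_le_eq_sum_content:
  "card {j \<in> {1..n}. s j \<le> k} = (\<Sum>k'\<le>k. content n s k')"
proof (induction k)
  case (Suc k)
  have "{j \<in> {1..n}. s j \<le> Suc k} = {j \<in> {1..n}. s j \<le> k} \<union> {j \<in> {1..n}. s j = Suc k}"
    by auto
  then show ?case
    using Suc by (simp add: card_Un_disjoint disjoint_iff content_def)
qed (simp add: content_def)

lemma weakly_increasing_le_iff_card: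
  assumes mono: "weakly_increasing n s" and j: "j \<in> {1..n}"
  shows "s j \<le> k \<longleftrightarrow> j \<le> card {i \<in> {1..n}. s i \<le> k}"
proof
  assume "s j \<le> k"
  have "{1..j} \<subseteq> {i \<in> {1..n}. s i \<le> k}"
  proof
    fix i assume "i \<in> {1..j}"
    then show "i \<in> {i \<in> {1..n}. s i \<le> k}"
      using weakly_increasing_le[OF mono, of i j] j \<open>s j \<le> k\<close> by auto
  qed
  from card_mono[OF _ this] show "j \<le> card {i \<in> {1..n}. s i \<le> k}" by simp
next
  assume card_ge: "j \<le> card {i \<in> {1..n}. s i \<le> k}"
  show "s j \<le> k"
  proof (rule ccontr)
    assume "\<not> s j \<le> k"
    have "{i \<in> {1..n}. s i \<le> k} \<subseteq> {1..<j}"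
    proof
      fix i assume i: "i \<in> {i \<in> {1..n}. s i \<le> k}"
      have "\<not> j \<le> i"
      proof
        assume "j \<le> i"
        then have "s j \<le> s i" using weakly_increasing_le[OF mono, of j i] j i by auto
        then show False using i \<open>\<not> s j \<le> k\<close> by auto
      qed
      then show "i \<in> {1..<j}" using i by auto
    qed
    from card_mono[OF _ this] have "card {i \<in> {1..n}. s i \<le> k} < j" using j by auto
    with card_ge show False by simp
  qed
qed

lemma weakly_increasing_eq_by_content:
  assumes "\<forall>j. j \<notin> {1..n} \<longrightarrow> s j = 0" "\<forall>j. j \<notin> {1..n} \<longrightarrow> t j = 0"
    and "weakly_increasing n s" "weakly_increasing n t"
    and "content n s = content n t"
  shows "s = t"
proof
  fix j
  show "s j = t j"
  proof (cases "j \<in> {1..n}")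
    case True
    have "s j \<le> k \<longleftrightarrow> t j \<le> k" for k
    proof -
      have "card {i \<in> {1..n}. s i \<le> k} = card {i \<in> {1..n}. t i \<le> k}"
        by (simp only: card_le_eq_sum_content assms(5))
      then show ?thesis
        using weakly_increasing_le_iff_card[OF assms(3) True, of k]
          weakly_increasing_le_iff_card[OF assms(4) True, of k] by simp
    qed
    then show ?thesis by (metis le_antisym order_refl)
  qed (use assms in auto)
qed

lemma F_seqs_unique:
  assumes "s \<in> F_seqs n I \<alpha>" "t \<in> F_seqs n J \<alpha>"
  shows "s = t"
  by (rule weakly_increasing_eq_by_content) (use assms in \<open>auto simp: F_seqs_def\<close>)

lemma finite_F_seqs: "finite (F_seqs n I \<alpha>)"
proof (cases "F_seqs n I \<alpha> = {}")
  case False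
  then obtain s where "s \<in> F_seqs n I \<alpha>" by auto
  then have "F_seqs n I \<alpha> \<subseteq> {s}" using F_seqs_unique by blast
  then show ?thesis using finite_subset by blast
qed simp

definition compatible :: "nat \<Rightarrow> ('v \<times> 'v) set \<Rightarrow> (nat \<Rightarrow> 'v) \<Rightarrow> (nat \<Rightarrow> nat) \<Rightarrow> bool" where
  "compatible n E \<sigma> s \<longleftrightarrow> (\<forall>j\<in>{1..n-1}. s j = s (Suc j) \<longrightarrow> (\<sigma> j, \<sigma> (Suc j)) \<notin> E)"

lemma F_seqs_XDes:
  "F_seqs (card V) (XDes V E \<sigma>) \<alpha> = {s \<in> F_seqs (card V) {} \<alpha>. compatible (card V) E \<sigma> s}"
  unfolding F_seqs_def XDes_def compatible_def weakly_increasing_def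
  by (auto simp: order.strict_iff_order)

lemma finite_Sigma_V:
  assumes "finite V"
  shows "finite (Sigma_V V)"
proof (rule finite_subset)
  show "Sigma_V V \<subseteq> PiE {1..card V} (\<lambda>_. V)"
    unfolding Sigma_V_def PiE_def extensional_def bij_betw_def by auto
  show "finite (PiE {1..card V} (\<lambda>_. V))"
    using assms by (simp add: finite_PiE)
qed

lemma Sigma_V_comp_permutation:
  assumes "\<sigma> \<in> Sigma_V V" "bij_betw \<pi> {1..card V} {1..card V}"
    and "\<And>j. j \<notin> {1..card V} \<Longrightarrow> \<pi> j = j"
  shows "\<sigma> \<circ> \<pi> \<in> Sigma_V V"
  using assms bij_betw_trans[OF assms(2)] unfolding Sigma_V_def by auto

definition compatible_pairs ::
    "'v set \<Rightarrow> ('v \<times> 'v) set \<Rightarrow> (nat \<Rightarrow> nat) \<Rightarrow> ((nat \<Rightarrow> 'v) \<times> (nat \<Rightarrow> nat)) set" where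
  "compatible_pairs V E \<alpha> =
     (SIGMA \<sigma>:Sigma_V V. {s \<in> F_seqs (card V) {} \<alpha>. compatible (card V) E \<sigma> s})"

lemma U_eq_card_compatible_pairs:
  assumes "finite V"
  shows "U V E \<alpha> = int (card (compatible_pairs V E \<alpha>))"
proof -
  have "U V E \<alpha>
      = int (\<Sum>\<sigma>\<in>Sigma_V V. card {s \<in> F_seqs (card V) {} \<alpha>. compatible (card V) E \<sigma> s})"
    unfolding U_def F_eq_card_F_seqs F_seqs_XDes by simp
  also have "\<dots> = int (card (compatible_pairs V E \<alpha>))"
    unfolding compatible_pairs_def
    using finite_Sigma_V[OF assms] finite_F_seqs by (subst card_SigmaI) auto
  finally show ?thesis .
qed

definition block :: "nat \<Rightarrow> (nat \<Rightarrow> nat) \<Rightarrow> nat \<Rightarrow> nat set" where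
  "block n s j = {i \<in> {1..n}. s i = s j}"

definition block_reversal :: "nat \<Rightarrow> (nat \<Rightarrow> nat) \<Rightarrow> nat \<Rightarrow> nat" where
  "block_reversal n s j =
     (if j \<in> {1..n} then Min (block n s j) + Max (block n s j) - j else j)"

lemma block_reversal_eq:
  "j \<in> {1..n} \<Longrightarrow> block_reversal n s j = Min (block n s j) + Max (block n s j) - j"
  by (simp add: block_reversal_def)

lemma block_reversal_outside: "j \<notin> {1..n} \<Longrightarrow> block_reversal n s j = j"
  by (auto simp: block_reversal_def)

lemma block_eq_block: "i \<in> block n s j \<Longrightarrow> block n s i = block n s j"
  by (simp add: block_def)

lemma block_eq_interval:
  assumes mono: "weakly_increasing n s" and j: "j \<in> {1..n}"
  shows "block n s j = {Min (block n s j)..Max (block n s j)}"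
proof -
  let ?a = "Min (block n s j)" and ?b = "Max (block n s j)"
  have fin: "finite (block n s j)" and ne: "block n s j \<noteq> {}"
    using j by (auto simp: block_def)
  have a: "?a \<in> block n s j" and b: "?b \<in> block n s j"
    using Min_in[OF fin ne] Max_in[OF fin ne] .
  have "i \<in> block n s j" if i: "i \<in> {?a..?b}" for i
  proof -
    have "s ?a \<le> s i" "s i \<le> s ?b"
      using weakly_increasing_le[OF mono, of ?a i] weakly_increasing_le[OF mono, of i ?b] i a b
      by (auto simp: block_def)
    then show ?thesis using i a b by (auto simp: block_def)
  qed
  moreover have "block n s j \<subseteq> {?a..?b}"
    using fin by auto
  ultimately show ?thesis by blast
qed

lemma block_reversal_in_block:
  assumes "weakly_increasing n s" "j \<in> {1..n}"
  shows "block_reversal n s j \<in> block n s j"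
proof -
  let ?a = "Min (block n s j)" and ?b = "Max (block n s j)"
  have "j \<in> block n s j" using assms(2) by (simp add: block_def)
  then have "j \<in> {?a..?b}" using block_eq_interval[OF assms] by blast
  then have "?a + ?b - j \<in> {?a..?b}" by auto
  then show ?thesis using block_eq_interval[OF assms] block_reversal_eq[OF assms(2)] by simp
qed

lemma block_reversal_involution:
  assumes mono: "weakly_increasing n s"
  shows "block_reversal n s (block_reversal n s j) = j"
proof (cases "j \<in> {1..n}")
  case True
  let ?a = "Min (block n s j)" and ?b = "Max (block n s j)" and ?r = "block_reversal n s j"
  have r: "?r \<in> block n s j" using block_reversal_in_block[OF mono True] .
  have "j \<in> block n s j" using True by (simp add: block_def)
  then have "j \<in> {?a..?b}" using block_eq_interval[OF mono True] by blast
  moreover have "?r \<in> {1..n}" using r by (simp add: block_def)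
  then have "block_reversal n s ?r = ?a + ?b - ?r"
    using block_reversal_eq block_eq_block[OF r] by simp
  ultimately show ?thesis using block_reversal_eq[OF True] by simp
next
  case False
  then show ?thesis by (simp add: block_reversal_outside)
qed

lemma block_reversal_Suc:
  assumes mono: "weakly_increasing n s" and "1 \<le> j" "Suc j \<le> n" "s j = s (Suc j)"
  shows "Suc (block_reversal n s (Suc j)) = block_reversal n s j"
proof -
  have j: "j \<in> {1..n}" and sj: "Suc j \<in> block n s j" and "Suc j \<in> {1..n}"
    using assms by (auto simp: block_def)
  then have "block_reversal n s (Suc j) = Min (block n s j) + Max (block n s j) - Suc j"
    using block_reversal_eq block_eq_block[OF sj] by simp
  moreover have "Suc j \<le> Max (block n s j)"
    using sj block_eq_interval[OF mono j] by auto
  ultimately show ?thesis using block_reversal_eq[OF j] by simp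
qed

lemma compatible_pairs_block_reversal:
  assumes "(\<sigma>, s) \<in> compatible_pairs V E \<alpha>"
  shows "(\<sigma> \<circ> block_reversal (card V) s, s) \<in> compatible_pairs V (E\<inverse>) \<alpha>"
proof -
  let ?n = "card V" and ?r = "block_reversal (card V) s"
  have \<sigma>: "\<sigma> \<in> Sigma_V V" and s: "s \<in> F_seqs ?n {} \<alpha>" and comp: "compatible ?n E \<sigma> s"
    using assms by (auto simp: compatible_pairs_def)
  have mono: "weakly_increasing ?n s" using s by (simp add: F_seqs_def)
  have r_in: "?r j \<in> {1..?n}" "s (?r j) = s j" if "j \<in> {1..?n}" for j
    using block_reversal_in_block[OF mono that] by (auto simp: block_def)
  have "bij_betw ?r {1..?n} {1..?n}"
    by (rule bij_betw_byWitness[where f' = ?r])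
       (use block_reversal_involution[OF mono] r_in in auto)
  then have "\<sigma> \<circ> ?r \<in> Sigma_V V"
    by (rule Sigma_V_comp_permutation[OF \<sigma>]) (rule block_reversal_outside)
  moreover have "compatible ?n (E\<inverse>) (\<sigma> \<circ> ?r) s"
    unfolding compatible_def
  proof (intro ballI impI)
    fix j assume j: "j \<in> {1..?n - 1}" and eq: "s j = s (Suc j)"
    let ?i = "?r (Suc j)"
    have Suc_i: "Suc ?i = ?r j" using block_reversal_Suc[OF mono _ _ eq] j by auto
    have "j \<in> {1..?n}" "Suc j \<in> {1..?n}" using j by auto
    then have "?i \<in> {1..?n}" "s ?i = s (Suc j)" "Suc ?i \<in> {1..?n}" "s (Suc ?i) = s j"
      using r_in[of j] r_in[of "Suc j"] Suc_i by auto
    then have "?i \<in> {1..?n - 1}" "s ?i = s (Suc ?i)" using eq by auto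
    then have "(\<sigma> ?i, \<sigma> (Suc ?i)) \<notin> E" using comp unfolding compatible_def by blast
    then show "((\<sigma> \<circ> ?r) j, (\<sigma> \<circ> ?r) (Suc j)) \<notin> E\<inverse>" using Suc_i by simp
  qed
  ultimately show ?thesis using s by (simp add: compatible_pairs_def)
qed

lemma U_converse:
  assumes "finite V"
  shows "U V (E\<inverse>) = U V E"
proof
  fix \<alpha>
  let ?f = "\<lambda>(\<sigma>, s). (\<sigma> \<circ> block_reversal (card V) s, s)"
  have "?f (?f (\<sigma>, s)) = (\<sigma>, s)" if "s \<in> F_seqs (card V) {} \<alpha>" for \<sigma> s
  proof -
    have "weakly_increasing (card V) s" using that by (simp add: F_seqs_def)
    then show ?thesis by (simp add: fun_eq_iff block_reversal_involution)
  qed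
  then have f_f: "\<forall>p\<in>compatible_pairs V D \<alpha>. ?f (?f p) = p" for D
    by (auto simp: compatible_pairs_def)
  have "bij_betw ?f (compatible_pairs V E \<alpha>) (compatible_pairs V (E\<inverse>) \<alpha>)"
  proof (rule bij_betw_byWitness[where f' = ?f])
    show "\<forall>p\<in>compatible_pairs V E \<alpha>. ?f (?f p) = p"
      and "\<forall>p\<in>compatible_pairs V (E\<inverse>) \<alpha>. ?f (?f p) = p"
      by (rule f_f)+
    show "?f ` compatible_pairs V E \<alpha> \<subseteq> compatible_pairs V (E\<inverse>) \<alpha>"
      using compatible_pairs_block_reversal[of _ _ V E] by auto
    show "?f ` compatible_pairs V (E\<inverse>) \<alpha> \<subseteq> compatible_pairs V E \<alpha>"
      using compatible_pairs_block_reversal[of _ _ V "E\<inverse>"] by auto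
  qed
  then have "card (compatible_pairs V E \<alpha>) = card (compatible_pairs V (E\<inverse>) \<alpha>)"
    by (rule bij_betw_same_card)
  then show "U V (E\<inverse>) \<alpha> = U V E \<alpha>"
    by (simp add: U_eq_card_compatible_pairs[OF assms])
qed

definition reversal :: "nat \<Rightarrow> (nat \<Rightarrow> 'v) \<Rightarrow> nat \<Rightarrow> 'v" where
  "reversal n \<sigma> j = (if j \<in> {1..n} then \<sigma> (Suc n - j) else undefined)"

lemma reversal_in_Sigma_V:
  assumes "\<sigma> \<in> Sigma_V V"
  shows "reversal (card V) \<sigma> \<in> Sigma_V V"
proof -
  let ?n = "card V"
  have "bij_betw (\<lambda>j. Suc ?n - j) {1..?n} {1..?n}"
    by (rule bij_betw_byWitness[where f' = "\<lambda>j. Suc ?n - j"]) auto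
  then have "bij_betw (\<sigma> \<circ> (\<lambda>j. Suc ?n - j)) {1..?n} V"
    using assms bij_betw_trans unfolding Sigma_V_def by blast
  then have "bij_betw (reversal ?n \<sigma>) {1..?n} V"
    by (rule bij_betw_cong[THEN iffD1, rotated]) (simp add: reversal_def)
  then show ?thesis by (simp add: Sigma_V_def reversal_def)
qed

lemma reversal_reversal: "\<sigma> \<in> Sigma_V V \<Longrightarrow> reversal (card V) (reversal (card V) \<sigma>) = \<sigma>"
  unfolding Sigma_V_def by (auto simp: reversal_def fun_eq_iff)

lemma mem_op_set: "I \<subseteq> {..n} \<Longrightarrow> x \<le> n \<Longrightarrow> x \<in> op_set n I \<longleftrightarrow> n - x \<in> I"
  unfolding op_set_def by (auto simp: image_iff intro: bexI[where x = "n - x"])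

lemma XDes_reversal:
  assumes "\<sigma> \<in> Sigma_V V"
  shows "XDes V ((compl_edges V E)\<inverse>) (reversal (card V) \<sigma>)
           = {1..card V - 1} - op_set (card V) (XDes V E \<sigma>)"
proof (rule set_eqI)
  fix x
  let ?n = "card V"
  have bij: "bij_betw \<sigma> {1..?n} V" using assms by (simp add: Sigma_V_def)
  show "x \<in> XDes V ((compl_edges V E)\<inverse>) (reversal ?n \<sigma>) \<longleftrightarrow>
        x \<in> {1..?n - 1} - op_set ?n (XDes V E \<sigma>)"
  proof (cases "x \<in> {1..?n - 1}")
    case True
    let ?u = "\<sigma> (?n - x)" and ?v = "\<sigma> (Suc (?n - x))"
    have "?n - x \<in> {1..?n}" "Suc (?n - x) \<in> {1..?n}" using True by auto
    then have "?u \<in> V" "?v \<in> V" "?u \<noteq> ?v"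
      using bij_betwE[OF bij] inj_onD[OF bij_betw_imp_inj_on[OF bij]] by fastforce+
    then have "x \<in> XDes V ((compl_edges V E)\<inverse>) (reversal ?n \<sigma>) \<longleftrightarrow> (?u, ?v) \<notin> E"
      using True by (auto simp: XDes_def reversal_def compl_edges_def Suc_diff_le)
    also have "\<dots> \<longleftrightarrow> ?n - x \<notin> XDes V E \<sigma>"
      using True by (auto simp: XDes_def)
    also have "\<dots> \<longleftrightarrow> x \<notin> op_set ?n (XDes V E \<sigma>)"
      using True by (subst mem_op_set) (auto simp: XDes_def)
    finally show ?thesis using True by blast
  qed (auto simp: XDes_def)
qed

definition canonical_seq :: "nat \<Rightarrow> nat set \<Rightarrow> nat \<Rightarrow> nat" where
  "canonical_seq n J j = (if j \<in> {1..n} then Suc (card {i \<in> J. i < j}) else 0)"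

lemma canonical_seq_in_F_seqs:
  assumes "J \<subseteq> {1..n - 1}" "I \<subseteq> J"
  shows "canonical_seq n J \<in> F_seqs n I (content n (canonical_seq n J))"
proof -
  have fin: "finite J" using assms(1) finite_subset by blast
  have "canonical_seq n J j \<le> canonical_seq n J (Suc j)" if "1 \<le> j" "j < n" for j
  proof -
    have "card {i \<in> J. i < j} \<le> card {i \<in> J. i < Suc j}"
      by (rule card_mono) (use fin in auto)
    then show ?thesis using that by (simp add: canonical_seq_def)
  qed
  moreover have "canonical_seq n J j < canonical_seq n J (Suc j)" if "j \<in> J" for j
  proof -
    have "j \<in> {1..n - 1}" using that assms(1) by blast
    then have "1 \<le> j" "j < n" by auto
    moreover have "{i \<in> J. i < Suc j} = insert j {i \<in> J. i < j}" using that by auto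
    ultimately show ?thesis using fin by (simp add: canonical_seq_def)
  qed
  moreover have "\<forall>j. j \<notin> {1..n} \<longrightarrow> canonical_seq n J j = 0"
    and "\<forall>j\<in>{1..n}. 1 \<le> canonical_seq n J j"
    by (simp_all add: canonical_seq_def)
  ultimately show ?thesis
    using assms(2) unfolding F_seqs_def weakly_increasing_def by blast
qed

lemma F_content_canonical_seq_eq_0_iff:
  assumes I: "I \<subseteq> {1..n - 1}" and J: "J \<subseteq> {1..n - 1}"
  shows "F n I (content n (canonical_seq n J)) = 0 \<longleftrightarrow> \<not> I \<subseteq> J"
proof
  assume F0: "F n I (content n (canonical_seq n J)) = 0"
  show "\<not> I \<subseteq> J"
  proof
    assume "I \<subseteq> J"
    then have "canonical_seq n J \<in> F_seqs n I (content n (canonical_seq n J))"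
      by (rule canonical_seq_in_F_seqs[OF J])
    then show False using F0 finite_F_seqs by (auto simp: F_eq_card_F_seqs)
  qed
next
  assume "\<not> I \<subseteq> J"
  then obtain j where j: "j \<in> I" "j \<notin> J" by auto
  have "F_seqs n I (content n (canonical_seq n J)) = {}"
  proof (rule ccontr)
    assume "F_seqs n I (content n (canonical_seq n J)) \<noteq> {}"
    then obtain s where s: "s \<in> F_seqs n I (content n (canonical_seq n J))" by auto
    have "s = canonical_seq n J"
      by (rule F_seqs_unique[OF s canonical_seq_in_F_seqs[OF J order_refl]])
    then have "canonical_seq n J j < canonical_seq n J (Suc j)"
      using s j(1) by (simp add: F_seqs_def)
    moreover have "{i \<in> J. i < Suc j} = {i \<in> J. i < j}"
      using j(2) by (auto simp: less_Suc_eq)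
    moreover have "j \<in> {1..n - 1}" using j(1) I by blast
    then have "1 \<le> j" "Suc j \<le> n" by auto
    ultimately show False by (simp add: canonical_seq_def)
  qed
  then show "F n I (content n (canonical_seq n J)) = 0" by (simp add: F_eq_card_F_seqs)
qed

lemma F_linear_independent:
  fixes d :: "nat set \<Rightarrow> int"
  assumes zero: "\<And>\<alpha>. (\<Sum>I\<in>Pow {1..n - 1}. d I * F n I \<alpha>) = 0"
    and J: "J \<subseteq> {1..n - 1}"
  shows "d J = 0"
proof -
  have "finite J" using J finite_subset by blast
  then show ?thesis using J
  proof (induction J rule: finite_psubset_induct)
    case (psubset J)
    let ?\<alpha> = "content n (canonical_seq n J)"
    have others: "d I * F n I ?\<alpha> = 0" if "I \<in> Pow {1..n - 1} - {J}" for I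
    proof (cases "I \<subseteq> J")
      case True
      then have "d I = 0" using psubset.IH that by blast
      then show ?thesis by simp
    next
      case False
      then show ?thesis using that psubset.prems F_content_canonical_seq_eq_0_iff by auto
    qed
    have "0 = (\<Sum>I\<in>Pow {1..n - 1}. d I * F n I ?\<alpha>)" using zero by simp
    also have "\<dots> = d J * F n J ?\<alpha> + (\<Sum>I\<in>Pow {1..n - 1} - {J}. d I * F n I ?\<alpha>)"
      using psubset.prems by (subst sum.remove[of _ J]) auto
    also have "\<dots> = d J * F n J ?\<alpha>"
      using sum.neutral[of _ "\<lambda>I. d I * F n I ?\<alpha>"] others by simp
    finally show "d J = 0"
      using F_content_canonical_seq_eq_0_iff[OF psubset.prems psubset.prems] by simp
  qed
qed

lemma antipode_F_expansion:
  "antipode n (\<lambda>\<alpha>. \<Sum>I\<in>Pow {1..n - 1}. c I * F n I \<alpha>)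
     = (\<lambda>\<alpha>. \<Sum>I\<in>Pow {1..n - 1}. c I * (-1) ^ n * F n ({1..n - 1} - op_set n I) \<alpha>)"
  unfolding antipode_def
proof (rule the_equality)
  fix g
  assume "\<exists>c'. (\<lambda>\<alpha>. \<Sum>I\<in>Pow {1..n - 1}. c I * F n I \<alpha>)
        = (\<lambda>\<alpha>. \<Sum>I\<in>Pow {1..n - 1}. c' I * F n I \<alpha>) \<and>
      g = (\<lambda>\<alpha>. \<Sum>I\<in>Pow {1..n - 1}. c' I * (-1) ^ n * F n ({1..n - 1} - op_set n I) \<alpha>)"
  then obtain c' where
      same: "\<And>\<alpha>. (\<Sum>I\<in>Pow {1..n - 1}. c I * F n I \<alpha>) = (\<Sum>I\<in>Pow {1..n - 1}. c' I * F n I \<alpha>)"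
    and g: "g = (\<lambda>\<alpha>. \<Sum>I\<in>Pow {1..n - 1}. c' I * (-1) ^ n * F n ({1..n - 1} - op_set n I) \<alpha>)"
    by (auto simp: fun_eq_iff)
  have "(\<Sum>I\<in>Pow {1..n - 1}. (c I - c' I) * F n I \<alpha>) = 0" for \<alpha>
    using same[of \<alpha>] by (simp add: left_diff_distrib sum_subtractf)
  then have "c I = c' I" if "I \<in> Pow {1..n - 1}" for I
    using F_linear_independent[of "\<lambda>I. c I - c' I"] that by auto
  then show "g = (\<lambda>\<alpha>. \<Sum>I\<in>Pow {1..n - 1}. c I * (-1) ^ n * F n ({1..n - 1} - op_set n I) \<alpha>)"
    unfolding g by (intro ext sum.cong) auto
qed blast

lemma sum_Sigma_V_by_XDes:
  assumes "finite V"
  shows "(\<Sum>\<sigma>\<in>Sigma_V V. h (XDes V E \<sigma>))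
     = (\<Sum>I\<in>Pow {1..card V - 1}. int (card {\<sigma> \<in> Sigma_V V. XDes V E \<sigma> = I}) * h I)"
proof -
  have "(\<Sum>\<sigma>\<in>Sigma_V V. h (XDes V E \<sigma>))
      = (\<Sum>I\<in>Pow {1..card V - 1}. \<Sum>\<sigma>\<in>{\<sigma> \<in> Sigma_V V. XDes V E \<sigma> = I}. h (XDes V E \<sigma>))"
    by (rule sum.group[symmetric]) (auto simp: finite_Sigma_V[OF assms] XDes_def)
  also have "\<dots>
      = (\<Sum>I\<in>Pow {1..card V - 1}. int (card {\<sigma> \<in> Sigma_V V. XDes V E \<sigma> = I}) * h I)"
    by (intro sum.cong) auto
  finally show ?thesis .
qed

lemma antipode_U:
  assumes "finite V"
  shows "antipode (card V) (U V E) = (\<lambda>\<alpha>. (-1) ^ card V * U V (compl_edges V E) \<alpha>)"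
proof -
  let ?n = "card V" and ?c = "\<lambda>I. int (card {\<sigma> \<in> Sigma_V V. XDes V E \<sigma> = I})"
  let ?dual = "\<lambda>I. {1..?n - 1} - op_set ?n I"
  have expansion: "U V E = (\<lambda>\<alpha>. \<Sum>I\<in>Pow {1..?n - 1}. ?c I * F ?n I \<alpha>)"
    unfolding U_def by (intro ext sum_Sigma_V_by_XDes[OF assms])
  have "antipode ?n (U V E) = (\<lambda>\<alpha>. \<Sum>I\<in>Pow {1..?n - 1}. ?c I * (-1) ^ ?n * F ?n (?dual I) \<alpha>)"
    unfolding expansion by (rule antipode_F_expansion)
  also have "\<dots> = (\<lambda>\<alpha>. (-1) ^ ?n * U V ((compl_edges V E)\<inverse>) \<alpha>)"
  proof
    fix \<alpha>
    have "(\<Sum>I\<in>Pow {1..?n - 1}. ?c I * F ?n (?dual I) \<alpha>)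
        = (\<Sum>\<sigma>\<in>Sigma_V V. F ?n (?dual (XDes V E \<sigma>)) \<alpha>)"
      by (rule sum_Sigma_V_by_XDes[OF assms, symmetric])
    also have "\<dots> = (\<Sum>\<sigma>\<in>Sigma_V V. F ?n (XDes V ((compl_edges V E)\<inverse>) (reversal ?n \<sigma>)) \<alpha>)"
      by (intro sum.cong) (simp_all add: XDes_reversal)
    also have "\<dots> = U V ((compl_edges V E)\<inverse>) \<alpha>"
      unfolding U_def
      by (rule sum.reindex_bij_witness[where i = "reversal ?n" and j = "reversal ?n"])
         (simp_all add: reversal_reversal reversal_in_Sigma_V)
    finally have "(\<Sum>I\<in>Pow {1..?n - 1}. ?c I * F ?n (?dual I) \<alpha>) = U V ((compl_edges V E)\<inverse>) \<alpha>" .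
    moreover have "(\<Sum>I\<in>Pow {1..?n - 1}. ?c I * (-1) ^ ?n * F ?n (?dual I) \<alpha>)
        = (-1) ^ ?n * (\<Sum>I\<in>Pow {1..?n - 1}. ?c I * F ?n (?dual I) \<alpha>)"
      by (simp add: sum_distrib_left ac_simps)
    ultimately show "(\<Sum>I\<in>Pow {1..?n - 1}. ?c I * (-1) ^ ?n * F ?n (?dual I) \<alpha>)
        = (-1) ^ ?n * U V ((compl_edges V E)\<inverse>) \<alpha>"
      by simp
  qed
  finally show ?thesis by (simp add: U_converse[OF assms])
qed

lemma tournament_compl_edges: "tournament V E \<Longrightarrow> compl_edges V E = E\<inverse>"
  unfolding tournament_def digraph_def compl_edges_def by auto

theorem mainTheorem17:
  fixes V :: "'v set" and E :: "('v \<times> 'v) set"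
  assumes "tournament V E"
  shows "U V E = U V (compl_edges V E) \<and>
         antipode (card V) (U V E) = (\<lambda>\<alpha>. (-1) ^ card V * U V E \<alpha>)"
proof -
  have "finite V" using assms by (simp add: tournament_def digraph_def)
  have "U V E = U V (compl_edges V E)"
    using U_converse[OF \<open>finite V\<close>] tournament_compl_edges[OF assms] by simp
  with antipode_U[OF \<open>finite V\<close>, of E] show ?thesis by simp
qed

end
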